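(* Let $c\ge2$ and let $\mathcal{D}$ be a domain. Then the measure $\mathsf{FKIs}_{\mathcal{D}^\circ,c}$ on $\{0,1\}^{E(\mathcal{D}^\circ)}$ satisfies the FKG lattice condition, and hence is positively associated.
   Context: Weights $a=b=1$. Faces of $\mathbb{Z}^2$ are centered at integer points; the face $(i,j)$ is even if $i+j$ is even, odd otherwise. A domain $\mathcal{D}$ is a finite subgraph of $\mathbb{Z}^2$ consisting of a simple cycle $\partial\mathcal{D}$ with everything it encloses. An ice-rule spin configuration is $\sigma\colon F(\mathbb{Z}^2)\to\{\pm1\}$ such that around every vertex at least one diagonal pair of faces has equal spins; a vertex is of type $c$ if both diagonal pairs agree. $\mathsf{Spin}_{\mathcal{D},c}^{++}$ is the measure on ice-rule configurations equal to $+1$ on all faces outside $\mathcal{D}$, proportional to $c^{N_c}$ with $N_c$ the number of type-$c$ vertices of $\mathcal{D}$. A corner of $\mathcal{D}$ is a pair $(u,z)$ with $u$ a face outside $\mathcal{D}$ sharing an edge with a face of $\mathcal{D}$ and $z$ a vertex of $\partial\mathcal{D}$ on $u$. $\mathcal{D}^\bullet$ is the graph on even faces of $\mathcal{D}$ and even corners with edges between even faces of $\mathcal{D}$ sharing a vertex, between a corner $(u,z)$ and an even face $v\ni z$ of $\mathcal{D}$, and between corners $(u,z),(v,z)$, after identifying corners $(u,z),(u,z')$ when $zz'$ is an edge of $\mathcal{D}$; $\mathcal{D}^\circ$ is defined likewise with odd faces and corners. Edges of both are in bijection with vertices of $\mathcal{D}$; $e\in E(\mathcal{D}^\circ)$ and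 $e^*\in E(\mathcal{D}^\bullet)$ denote dual edges. Spins extend to corners by $\sigma(u,z)=\sigma(u)$. $\theta(\sigma^\circ)$ is the set of edges of $\mathcal{D}^\circ$ whose endpoints have different spins; $\omega(\sigma^\bullet)$ is the set of edges $e$ of $\mathcal{D}^\circ$ whose dual $e^*$ has endpoints with different spins. Given $\sigma$, $\xi\in\{0,1\}^{E(\mathcal{D}^\circ)}$ is defined by: $\xi(e)=0$ on $\theta(\sigma^\circ)$, $\xi(e)=1$ on $\omega(\sigma^\bullet)$, otherwise independently $\xi(e)=1$ with probability $(c-1)/c$. $\mathsf{FKIs}_{\mathcal{D}^\circ,c}$ is the law of $\xi$ when $\sigma\sim\mathsf{Spin}_{\mathcal{D},c}^{++}$. The FKG lattice condition for $\mu$ on $\{0,1\}^{E}$ with the pointwise order is $\mu(\xi\vee\xi')\mu(\xi\wedge\xi')\ge\mu(\xi)\mu(\xi')$. *)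

theory Defs
  imports Complex_Main
begin

text \<open>Faces of Z^2 are indexed by their centres (i,j) :: int * int.
  A vertex of Z^2 is indexed by (a,b) :: int * int and stands for the point
  (a+1/2, b+1/2); its four surrounding faces are (a,b),(a+1,b),(a,b+1),(a+1,b+1).\<close>

type_synonym face = "int \<times> int"
type_synonym vertex = "int \<times> int"

definition even_face :: "face \<Rightarrow> bool" where
  "even_face f = even (fst f + snd f)"

definition lattice_adj :: "vertex \<Rightarrow> vertex \<Rightarrow> bool" where
  "lattice_adj v w = (\<bar>fst v - fst w\<bar> + \<bar>snd v - snd w\<bar> = 1)"

definition faces_around :: "vertex \<Rightarrow> face set" where
  "faces_around v = {(fst v, snd v), (fst v + 1, snd v), (fst v, snd v + 1), (fst v + 1, snd v + 1)}"

definition diag1 :: "vertex \<Rightarrow> face \<times> face" where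
  "diag1 v = ((fst v, snd v), (fst v + 1, snd v + 1))"
definition diag2 :: "vertex \<Rightarrow> face \<times> face" where
  "diag2 v = ((fst v + 1, snd v), (fst v, snd v + 1))"

definition odd_pair :: "vertex \<Rightarrow> face \<times> face" where
  "odd_pair v = (if even (fst v + snd v) then diag2 v else diag1 v)"
definition even_pair :: "vertex \<Rightarrow> face \<times> face" where
  "even_pair v = (if even (fst v + snd v) then diag1 v else diag2 v)"

definition simple_cycle :: "vertex list \<Rightarrow> bool" where
  "simple_cycle cs \<longleftrightarrow> distinct cs \<and> length cs \<ge> 3 \<and>
     (\<forall>i < length cs. lattice_adj (cs ! i) (cs ! ((i + 1) mod length cs)))"

definition cycle_edge :: "vertex list \<Rightarrow> vertex \<Rightarrow> vertex \<Rightarrow> bool" where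
  "cycle_edge cs v w \<longleftrightarrow>
     (\<exists>i < length cs. {cs ! i, cs ! ((i + 1) mod length cs)} = {v, w})"

text \<open>A face (i,j) is enclosed by the cycle iff the horizontal ray from its centre
  to the right crosses the cycle an odd number of times; the ray crosses exactly the
  vertical cycle edges joining (a,j-1) and (a,j) with a >= i.\<close>
definition enclosed_face :: "vertex list \<Rightarrow> face \<Rightarrow> bool" where
  "enclosed_face cs f \<longleftrightarrow>
     odd (card {a. a \<ge> fst f \<and> cycle_edge cs (a, snd f - 1) (a, snd f)})"

definition D_faces :: "vertex list \<Rightarrow> face set" where
  "D_faces cs = {f. enclosed_face cs f}"

definition D_verts :: "vertex list \<Rightarrow> vertex set" where
  "D_verts cs = set cs \<union> {v. faces_around v \<subseteq> D_faces cs}"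

definition bdry_verts :: "vertex list \<Rightarrow> vertex set" where
  "bdry_verts cs = set cs"

section \<open>Spin configurations (True = +1, False = -1)\<close>

definition ice_rule_at :: "(face \<Rightarrow> bool) \<Rightarrow> vertex \<Rightarrow> bool" where
  "ice_rule_at \<sigma> v \<longleftrightarrow> \<sigma> (fst (diag1 v)) = \<sigma> (snd (diag1 v)) \<or> \<sigma> (fst (diag2 v)) = \<sigma> (snd (diag2 v))"

definition type_c_at :: "(face \<Rightarrow> bool) \<Rightarrow> vertex \<Rightarrow> bool" where
  "type_c_at \<sigma> v \<longleftrightarrow> \<sigma> (fst (diag1 v)) = \<sigma> (snd (diag1 v)) \<and> \<sigma> (fst (diag2 v)) = \<sigma> (snd (diag2 v))"

definition spin_configs :: "vertex list \<Rightarrow> (face \<Rightarrow> bool) set" where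
  "spin_configs cs = {\<sigma>. (\<forall>f. f \<notin> D_faces cs \<longrightarrow> \<sigma> f) \<and> (\<forall>v. ice_rule_at \<sigma> v)}"

definition N_c :: "vertex list \<Rightarrow> (face \<Rightarrow> bool) \<Rightarrow> nat" where
  "N_c cs \<sigma> = card {v \<in> D_verts cs. type_c_at \<sigma> v}"

definition spin_weight :: "vertex list \<Rightarrow> real \<Rightarrow> (face \<Rightarrow> bool) \<Rightarrow> real" where
  "spin_weight cs c \<sigma> = c ^ N_c cs \<sigma>"

definition spin_prob :: "vertex list \<Rightarrow> real \<Rightarrow> (face \<Rightarrow> bool) \<Rightarrow> real" where
  "spin_prob cs c \<sigma> =
     (if \<sigma> \<in> spin_configs cs
      then spin_weight cs c \<sigma> / (\<Sum>\<tau>\<in>spin_configs cs. spin_weight cs c \<tau>) else 0)"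

definition face_edge_adj :: "face \<Rightarrow> face \<Rightarrow> bool" where
  "face_edge_adj f g = (\<bar>fst f - fst g\<bar> + \<bar>snd f - snd g\<bar> = 1)"

definition is_corner :: "vertex list \<Rightarrow> face \<Rightarrow> vertex \<Rightarrow> bool" where
  "is_corner cs u z \<longleftrightarrow> u \<notin> D_faces cs \<and> (\<exists>f \<in> D_faces cs. face_edge_adj u f)
     \<and> z \<in> bdry_verts cs \<and> u \<in> faces_around z"

text \<open>Nodes of D-circ / D-bullet: a face of D, or (a representative of the
  identification class of) a corner (u,z).\<close>
datatype node = FaceNode face | CornerNode face vertex

definition node_of :: "vertex list \<Rightarrow> vertex \<Rightarrow> face \<Rightarrow> node" where
  "node_of cs z f = (if f \<in> D_faces cs then FaceNode f else CornerNode f z)"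

text \<open>Edges of D-circ (and their duals in D-bullet) are indexed by the vertices z of D;
  the edge at z joins the two odd (resp. even) faces/corners around z.\<close>
definition circ_ends :: "vertex list \<Rightarrow> vertex \<Rightarrow> node \<times> node" where
  "circ_ends cs z = (node_of cs z (fst (odd_pair z)), node_of cs z (snd (odd_pair z)))"

definition bullet_ends :: "vertex list \<Rightarrow> vertex \<Rightarrow> node \<times> node" where
  "bullet_ends cs z = (node_of cs z (fst (even_pair z)), node_of cs z (snd (even_pair z)))"

fun node_spin :: "(face \<Rightarrow> bool) \<Rightarrow> node \<Rightarrow> bool" where
  "node_spin \<sigma> (FaceNode f) = \<sigma> f"
| "node_spin \<sigma> (CornerNode u z) = \<sigma> u"

definition theta :: "vertex list \<Rightarrow> (face \<Rightarrow> bool) \<Rightarrow> vertex set" where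
  "theta cs \<sigma> = {z \<in> D_verts cs. node_spin \<sigma> (fst (circ_ends cs z)) \<noteq> node_spin \<sigma> (snd (circ_ends cs z))}"

definition omega :: "vertex list \<Rightarrow> (face \<Rightarrow> bool) \<Rightarrow> vertex set" where
  "omega cs \<sigma> = {z \<in> D_verts cs. node_spin \<sigma> (fst (bullet_ends cs z)) \<noteq> node_spin \<sigma> (snd (bullet_ends cs z))}"

text \<open>A configuration xi in {0,1}^E(D-circ) is represented by the set of edges
  (i.e. vertices of D) where xi = 1.  Conditional law of xi given sigma.\<close>
definition xi_cond :: "vertex list \<Rightarrow> real \<Rightarrow> (face \<Rightarrow> bool) \<Rightarrow> vertex set \<Rightarrow> real" where
  "xi_cond cs c \<sigma> \<xi> =
     (let F = D_verts cs - theta cs \<sigma> - omega cs \<sigma>; p = (c - 1) / c in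
      if \<xi> \<subseteq> D_verts cs \<and> \<xi> \<inter> theta cs \<sigma> = {} \<and> omega cs \<sigma> \<subseteq> \<xi>
      then p ^ card (\<xi> \<inter> F) * (1 - p) ^ card (F - \<xi>) else 0)"

definition FKIs :: "vertex list \<Rightarrow> real \<Rightarrow> vertex set \<Rightarrow> real" where
  "FKIs cs c \<xi> = (\<Sum>\<sigma>\<in>spin_configs cs. spin_prob cs c \<sigma> * xi_cond cs c \<sigma> \<xi>)"

definition fkg_lattice :: "'e set \<Rightarrow> ('e set \<Rightarrow> real) \<Rightarrow> bool" where
  "fkg_lattice E \<mu> \<longleftrightarrow>
     (\<forall>\<xi> \<xi>'. \<xi> \<subseteq> E \<longrightarrow> \<xi>' \<subseteq> E \<longrightarrow> \<mu> (\<xi> \<union> \<xi>') * \<mu> (\<xi> \<inter> \<xi>') \<ge> \<mu> \<xi> * \<mu> \<xi>')"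

definition positively_associated :: "'e set \<Rightarrow> ('e set \<Rightarrow> real) \<Rightarrow> bool" where
  "positively_associated E \<mu> \<longleftrightarrow>
     (\<forall>f g :: 'e set \<Rightarrow> real. mono_on (Pow E) f \<longrightarrow> mono_on (Pow E) g \<longrightarrow>
        (\<Sum>\<xi>\<in>Pow E. f \<xi> * g \<xi> * \<mu> \<xi>) \<ge> (\<Sum>\<xi>\<in>Pow E. f \<xi> * \<mu> \<xi>) * (\<Sum>\<xi>\<in>Pow E. g \<xi> * \<mu> \<xi>))"

end

theory Submission
  imports Defs
begin

(* Summing out the spins, FKIs(xi) is proportional to |O(xi)| * Psi(xi).  Here O(xi) is the set
   of spin configurations that are +1 off D and whose odd spins agree across every edge of xi,
   E(kappa) is the set of configurations, +1 off D, whose even spins agree at every vertex of D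
   outside kappa, and Psi(xi) is the sum over kappa <= xi of (c - 2)^|xi - kappa| * |E(kappa)|.
   Two facts make this work: off D the ice rule holds automatically, and odd and even spins do not
   interact, so that O(xi) and E(kappa) are independent events under the uniform measure on the
   set P of configurations that are +1 off D.
   Under pointwise multiplication of signs, O(xi) and E(kappa) are subgroups of P, and the product
   formula |H| |K| = |H intersect K| |HK| makes xi |-> |O(xi)| and kappa |-> |E(kappa)|
   log-supermodular.  Since c >= 2, the four functions theorem transfers this to Psi, which yields
   the FKG lattice condition; Harris' inequality, again a consequence of the four functions
   theorem, then gives positive association. *)

section \<open>The four functions theorem and the FKG inequality\<close>

lemma four_numbers_inequality:
  fixes a0 a1 b0 b1 c0 c1 d0 d1 :: real
  assumes nn: "0 \<le> a0" "0 \<le> a1" "0 \<le> b0" "0 \<le> b1" "0 \<le> c0" "0 \<le> c1" "0 \<le> d0" "0 \<le> d1"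
    and h00: "a0 * b0 \<le> c0 * d0" and h01: "a0 * b1 \<le> c1 * d0"
    and h10: "a1 * b0 \<le> c1 * d0" and h11: "a1 * b1 \<le> c1 * d1"
  shows "(a0 + a1) * (b0 + b1) \<le> (c0 + c1) * (d0 + d1)"
proof (cases "c1 * d0 = 0")
  case True
  moreover have "0 \<le> a0 * b1" "0 \<le> a1 * b0" using nn by auto
  ultimately have "a0 * b1 = 0" "a1 * b0 = 0" using h01 h10 by linarith+
  moreover have "0 \<le> c0 * d1" "0 \<le> c1 * d0" using nn by auto
  ultimately show ?thesis using h00 h11 by (simp add: algebra_simps del: mult_eq_0_iff)
next
  case False
  define X where "X = c1 * d0"
  have c1: "c1 > 0" and d0: "d0 > 0" using False nn by (auto simp: less_le)
  then have X: "X > 0" by (simp add: X_def)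
  have bound: "(a0 * b0 / d0 + c1) * (d0 + a1 * b1 / c1) \<le> (c0 + c1) * (d0 + d1)"
    using h00 h11 nn c1 d0 by (intro mult_mono) (auto simp: field_simps mult.commute)
  have expand: "(a0 * b0 / d0 + c1) * (d0 + a1 * b1 / c1) = a0 * b0 + a1 * b1 + X + (a0 * b1) * (a1 * b0) / X"
    using c1 d0 by (simp add: X_def field_simps)
  \<comment> \<open>the cross terms are controlled by \<open>(X - a0 b1)(X - a1 b0) \<ge> 0\<close>\<close>
  have "X * (a0 * b1 + a1 * b0) \<le> X * X + (a0 * b1) * (a1 * b0)"
    using mult_nonneg_nonneg[of "X - a0 * b1" "X - a1 * b0"] h01 h10
    by (simp add: X_def algebra_simps)
  then have cross: "a0 * b1 + a1 * b0 \<le> X + (a0 * b1) * (a1 * b0) / X"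
    using X by (simp add: field_simps)
  have "(a0 + a1) * (b0 + b1) = a0 * b0 + a1 * b1 + (a0 * b1 + a1 * b0)"
    by (simp add: algebra_simps)
  then show ?thesis using bound expand cross by linarith
qed

lemma sum_Pow_insert:
  assumes "finite N" "x \<notin> N"
  shows "(\<Sum>A\<in>Pow (insert x N). f A) = (\<Sum>A\<in>Pow N. f A + f (insert x A))"
proof -
  have "inj_on (insert x) (Pow N)" "Pow N \<inter> insert x ` Pow N = {}"
    using assms(2) by (auto simp: inj_on_def)
  then show ?thesis
    using assms(1) by (simp add: Pow_insert sum.union_disjoint sum.reindex sum.distrib)
qed

theorem four_functions:
  fixes \<alpha> \<beta> \<gamma> \<delta> :: "'a set \<Rightarrow> real"
  assumes "finite N"
    and "\<And>A. A \<subseteq> N \<Longrightarrow> 0 \<le> \<alpha> A" "\<And>A. A \<subseteq> N \<Longrightarrow> 0 \<le> \<beta> A"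
    and "\<And>A. A \<subseteq> N \<Longrightarrow> 0 \<le> \<gamma> A" "\<And>A. A \<subseteq> N \<Longrightarrow> 0 \<le> \<delta> A"
    and "\<And>A B. A \<subseteq> N \<Longrightarrow> B \<subseteq> N \<Longrightarrow> \<alpha> A * \<beta> B \<le> \<gamma> (A \<union> B) * \<delta> (A \<inter> B)"
  shows "(\<Sum>A\<in>Pow N. \<alpha> A) * (\<Sum>A\<in>Pow N. \<beta> A) \<le> (\<Sum>A\<in>Pow N. \<gamma> A) * (\<Sum>A\<in>Pow N. \<delta> A)"
  using assms
proof (induction N arbitrary: \<alpha> \<beta> \<gamma> \<delta> rule: finite_induct)
  case empty
  then show ?case by simp
next
  case (insert x N)
  have nonneg: "0 \<le> \<alpha> A" "0 \<le> \<beta> A" "0 \<le> \<gamma> A" "0 \<le> \<delta> A"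
    "0 \<le> \<alpha> (insert x A)" "0 \<le> \<beta> (insert x A)" "0 \<le> \<gamma> (insert x A)" "0 \<le> \<delta> (insert x A)"
    if "A \<subseteq> N" for A
    using that insert.prems(1-4)[of A] insert.prems(1-4)[of "insert x A"] by auto
  have "(\<Sum>A\<in>Pow N. \<alpha> A + \<alpha> (insert x A)) * (\<Sum>A\<in>Pow N. \<beta> A + \<beta> (insert x A))
      \<le> (\<Sum>A\<in>Pow N. \<gamma> A + \<gamma> (insert x A)) * (\<Sum>A\<in>Pow N. \<delta> A + \<delta> (insert x A))"
  proof (rule insert.IH)
    fix A B assume A: "A \<subseteq> N" and B: "B \<subseteq> N"
    then have "x \<notin> A" "x \<notin> B" using insert.hyps(2) by auto
    have ineq: "\<alpha> A' * \<beta> B' \<le> \<gamma> (A' \<union> B') * \<delta> (A' \<inter> B')"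
      if "A' \<subseteq> insert x N" "B' \<subseteq> insert x N" for A' B'
      using that by (rule insert.prems(5))
    show "(\<alpha> A + \<alpha> (insert x A)) * (\<beta> B + \<beta> (insert x B))
        \<le> (\<gamma> (A \<union> B) + \<gamma> (insert x (A \<union> B))) * (\<delta> (A \<inter> B) + \<delta> (insert x (A \<inter> B)))"
    proof (rule four_numbers_inequality)
      show "\<alpha> A * \<beta> B \<le> \<gamma> (A \<union> B) * \<delta> (A \<inter> B)"
        using ineq[of A B] A B by auto
      show "\<alpha> A * \<beta> (insert x B) \<le> \<gamma> (insert x (A \<union> B)) * \<delta> (A \<inter> B)"
        using ineq[of A "insert x B"] A B \<open>x \<notin> A\<close> by auto
      show "\<alpha> (insert x A) * \<beta> B \<le> \<gamma> (insert x (A \<union> B)) * \<delta> (A \<inter> B)"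
        using ineq[of "insert x A" B] A B \<open>x \<notin> B\<close> by auto
      show "\<alpha> (insert x A) * \<beta> (insert x B) \<le> \<gamma> (insert x (A \<union> B)) * \<delta> (insert x (A \<inter> B))"
        using ineq[of "insert x A" "insert x B"] A B by auto
    qed (use A B nonneg[of A] nonneg[of B] nonneg[of "A \<union> B"] nonneg[of "A \<inter> B"] in auto)
  qed (use nonneg in auto)
  then show ?case using insert.hyps by (simp add: sum_Pow_insert)
qed

lemma sum_Pow_power_card:
  fixes a b :: "'b :: comm_semiring_1"
  assumes "finite F"
  shows "(\<Sum>B\<in>Pow F. a ^ card B * b ^ card (F - B)) = (a + b) ^ card F"
proof -
  have "(\<Sum>B\<in>Pow F. a ^ card B * b ^ card (F - B)) = (\<Sum>B\<in>Pow F. (\<Prod>x\<in>B. a) * (\<Prod>x\<in>F - B. b))"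
    by (intro sum.cong) auto
  also have "\<dots> = (\<Prod>x\<in>F. a + b)" using prod_add[OF assms, of "\<lambda>_. a" "\<lambda>_. b"] by simp
  finally show ?thesis by simp
qed

lemma power_eq_sum_Pow:
  fixes a :: "'a :: comm_semiring_1"
  assumes "finite A"
  shows "(a + 1) ^ card A = (\<Sum>B\<in>Pow A. a ^ card B)"
  using sum_Pow_power_card[OF assms, of a 1] by simp

lemma card_Diff_add_card_Diff:
  assumes "finite A" "finite B" "C \<subseteq> A" "D \<subseteq> B"
  shows "card (A - C) + card (B - D) = card ((A \<union> B) - (C \<union> D)) + card ((A \<inter> B) - (C \<inter> D))"
proof -
  have fin: "finite C" "finite D" using assms finite_subset by auto
  have "card A + card B = card (A \<union> B) + card (A \<inter> B)"
    using assms(1,2) by (rule card_Un_Int)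
  moreover have "card C + card D = card (C \<union> D) + card (C \<inter> D)"
    using fin by (rule card_Un_Int)
  moreover have "card C \<le> card A" "card D \<le> card B"
    using assms by (simp_all add: card_mono)
  moreover have "card (C \<union> D) \<le> card (A \<union> B)" "card (C \<inter> D) \<le> card (A \<inter> B)"
    using assms by (intro card_mono; auto)+
  moreover have "card (A - C) = card A - card C" "card (B - D) = card B - card D"
    "card ((A \<union> B) - (C \<union> D)) = card (A \<union> B) - card (C \<union> D)"
    "card ((A \<inter> B) - (C \<inter> D)) = card (A \<inter> B) - card (C \<inter> D)"
    using assms fin by (auto intro!: card_Diff_subset)
  ultimately show ?thesis by linarith
qed

lemma fkg_lattice_cong:
  assumes "\<And>A. A \<subseteq> E \<Longrightarrow> f A = g A"
  shows "fkg_lattice E f \<longleftrightarrow> fkg_lattice E g"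
  unfolding fkg_lattice_def by (auto simp: assms inf.coboundedI1)

lemma fkg_lattice_mult:
  assumes f: "fkg_lattice E f" and g: "fkg_lattice E g"
    and f_nonneg: "\<And>A. A \<subseteq> E \<Longrightarrow> 0 \<le> f A" and g_nonneg: "\<And>A. A \<subseteq> E \<Longrightarrow> 0 \<le> g A"
  shows "fkg_lattice E (\<lambda>A. f A * g A)"
  unfolding fkg_lattice_def
proof (intro allI impI)
  fix A B assume A: "A \<subseteq> E" and B: "B \<subseteq> E"
  have "f A * f B \<le> f (A \<union> B) * f (A \<inter> B)" "g A * g B \<le> g (A \<union> B) * g (A \<inter> B)"
    using f g A B unfolding fkg_lattice_def by blast+
  moreover have "0 \<le> f (A \<union> B) * f (A \<inter> B)" "0 \<le> g A * g B"
    using A B f_nonneg g_nonneg by (simp_all add: le_infI1 mult_nonneg_nonneg)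
  ultimately have "(f A * f B) * (g A * g B) \<le> (f (A \<union> B) * f (A \<inter> B)) * (g (A \<union> B) * g (A \<inter> B))"
    by (rule mult_mono)
  then show "f A * g A * (f B * g B) \<le> f (A \<union> B) * g (A \<union> B) * (f (A \<inter> B) * g (A \<inter> B))"
    by (simp only: ac_simps)
qed

lemma fkg_lattice_divide:
  assumes "fkg_lattice E f"
  shows "fkg_lattice E (\<lambda>A. f A / K)"
  unfolding fkg_lattice_def
proof (intro allI impI)
  fix A B assume "A \<subseteq> E" "B \<subseteq> E"
  then have "f A * f B / (K * K) \<le> f (A \<union> B) * f (A \<inter> B) / (K * K)"
    using assms unfolding fkg_lattice_def by (intro divide_right_mono) simp_all
  then show "f A / K * (f B / K) \<le> f (A \<union> B) / K * (f (A \<inter> B) / K)"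
    by simp
qed

lemma fkg_lattice_sum_Pow:
  fixes \<alpha> :: "'a set \<Rightarrow> 'b set \<Rightarrow> real"
  assumes "finite N" and "\<And>A \<kappa>. A \<subseteq> E \<Longrightarrow> \<kappa> \<subseteq> N \<Longrightarrow> 0 \<le> \<alpha> A \<kappa>"
    and "\<And>A B \<kappa> \<kappa>'. A \<subseteq> E \<Longrightarrow> B \<subseteq> E \<Longrightarrow> \<kappa> \<subseteq> N \<Longrightarrow> \<kappa>' \<subseteq> N \<Longrightarrow>
           \<alpha> A \<kappa> * \<alpha> B \<kappa>' \<le> \<alpha> (A \<union> B) (\<kappa> \<union> \<kappa>') * \<alpha> (A \<inter> B) (\<kappa> \<inter> \<kappa>')"
  shows "fkg_lattice E (\<lambda>A. \<Sum>\<kappa>\<in>Pow N. \<alpha> A \<kappa>)"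
  unfolding fkg_lattice_def
proof (intro allI impI)
  fix A B assume "A \<subseteq> E" "B \<subseteq> E"
  then show "(\<Sum>\<kappa>\<in>Pow N. \<alpha> A \<kappa>) * (\<Sum>\<kappa>\<in>Pow N. \<alpha> B \<kappa>)
      \<le> (\<Sum>\<kappa>\<in>Pow N. \<alpha> (A \<union> B) \<kappa>) * (\<Sum>\<kappa>\<in>Pow N. \<alpha> (A \<inter> B) \<kappa>)"
    by (intro four_functions assms) auto
qed

lemma harris_inequality:
  fixes \<mu> f g :: "'e set \<Rightarrow> real"
  assumes "finite E" and fkg: "fkg_lattice E \<mu>" and \<mu>: "\<And>A. A \<subseteq> E \<Longrightarrow> 0 \<le> \<mu> A"
    and f: "mono_on (Pow E) f" "\<And>A. A \<subseteq> E \<Longrightarrow> 0 \<le> f A"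
    and g: "mono_on (Pow E) g" "\<And>A. A \<subseteq> E \<Longrightarrow> 0 \<le> g A"
  shows "(\<Sum>A\<in>Pow E. f A * \<mu> A) * (\<Sum>A\<in>Pow E. g A * \<mu> A)
    \<le> (\<Sum>A\<in>Pow E. f A * g A * \<mu> A) * (\<Sum>A\<in>Pow E. \<mu> A)"
proof (rule four_functions[OF \<open>finite E\<close>])
  fix A B assume A: "A \<subseteq> E" and B: "B \<subseteq> E"
  have "f A \<le> f (A \<union> B)" "g B \<le> g (A \<union> B)"
    using A B f(1) g(1) by (auto elim!: mono_onD)
  then have fg: "f A * g B \<le> f (A \<union> B) * g (A \<union> B)"
    using A B f(2) g(2) by (intro mult_mono) auto
  have \<mu>\<mu>: "\<mu> A * \<mu> B \<le> \<mu> (A \<union> B) * \<mu> (A \<inter> B)"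
    using fkg A B unfolding fkg_lattice_def by blast
  have "(f A * g B) * (\<mu> A * \<mu> B) \<le> (f (A \<union> B) * g (A \<union> B)) * (\<mu> (A \<union> B) * \<mu> (A \<inter> B))"
    using A B by (intro mult_mono[OF fg \<mu>\<mu>] mult_nonneg_nonneg f(2) g(2) \<mu>) auto
  then show "f A * \<mu> A * (g B * \<mu> B) \<le> f (A \<union> B) * g (A \<union> B) * \<mu> (A \<union> B) * \<mu> (A \<inter> B)"
    by (simp add: ac_simps)
qed (use f(2) g(2) \<mu> in auto)

theorem fkg_lattice_imp_positively_associated:
  fixes \<mu> :: "'e set \<Rightarrow> real"
  assumes "finite E" and nonneg: "\<And>A. A \<subseteq> E \<Longrightarrow> 0 \<le> \<mu> A"
    and total: "(\<Sum>A\<in>Pow E. \<mu> A) = 1" and fkg: "fkg_lattice E \<mu>"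
  shows "positively_associated E \<mu>"
  unfolding positively_associated_def
proof (intro allI impI)
  fix f g :: "'e set \<Rightarrow> real"
  assume f: "mono_on (Pow E) f" and g: "mono_on (Pow E) g"
  let ?E = "\<lambda>h. \<Sum>A\<in>Pow E. h A * \<mu> A"
  \<comment> \<open>shifting makes both functions nonnegative without changing their covariance\<close>
  define f' where "f' A = f A - f {}" for A
  define g' where "g' A = g A - g {}" for A
  have mono: "mono_on (Pow E) f'" "mono_on (Pow E) g'"
    using f g unfolding f'_def g'_def mono_on_def by auto
  have pos: "0 \<le> f' A" "0 \<le> g' A" if "A \<subseteq> E" for A
    using f g that unfolding f'_def g'_def by (auto elim!: mono_onD)
  have key: "?E f' * ?E g' \<le> ?E (\<lambda>A. f' A * g' A)"
    using harris_inequality[OF \<open>finite E\<close> fkg nonneg mono(1) pos(1) mono(2) pos(2)] total by simp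
  have shift: "?E (\<lambda>A. h A - a) = ?E h - a" for h a
    using total by (simp add: left_diff_distrib sum_subtractf flip: sum_distrib_left)
  have "?E (\<lambda>A. f' A * g' A) = (\<Sum>A\<in>Pow E. f A * g A * \<mu> A
      - g {} * (f A * \<mu> A) - f {} * (g A * \<mu> A) + f {} * g {} * \<mu> A)"
    by (rule sum.cong) (auto simp: f'_def g'_def algebra_simps)
  also have "\<dots> = (\<Sum>A\<in>Pow E. f A * g A * \<mu> A) - g {} * ?E f - f {} * ?E g + f {} * g {}"
    using total by (simp add: sum.distrib sum_subtractf flip: sum_distrib_left)
  finally have "?E (\<lambda>A. f' A * g' A) = (\<Sum>A\<in>Pow E. f A * g A * \<mu> A) - g {} * ?E f - f {} * ?E g + f {} * g {}" .
  moreover have "?E f' = ?E f - f {}" "?E g' = ?E g - g {}"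
    unfolding f'_def g'_def by (rule shift)+
  ultimately have "(?E f - f {}) * (?E g - g {})
      \<le> (\<Sum>A\<in>Pow E. f A * g A * \<mu> A) - g {} * ?E f - f {} * ?E g + f {} * g {}"
    using key by simp
  then show "?E f * ?E g \<le> (\<Sum>A\<in>Pow E. f A * g A * \<mu> A)"
    by (simp add: algebra_simps)
qed

section \<open>Subgroups of sign patterns\<close>

definition agree :: "('a \<Rightarrow> bool) \<Rightarrow> ('a \<Rightarrow> bool) \<Rightarrow> 'a \<Rightarrow> bool" where
  "agree s t = (\<lambda>x. s x = t x)"

lemma agree_cancel_right [simp]: "agree (agree s t) t = s"
  by (auto simp: agree_def)

definition agree_closed :: "('a \<Rightarrow> bool) set \<Rightarrow> bool" where
  "agree_closed H \<longleftrightarrow> (\<forall>s\<in>H. \<forall>t\<in>H. agree s t \<in> H)"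

text \<open>Reading \<open>True\<close> as \<open>+1\<close>, \<open>agree\<close> is pointwise multiplication of signs, and a
  nonempty agreement-closed set is a subgroup.\<close>

lemma card_mult_card_eq_agree_image:
  assumes "finite H" "finite K" "agree_closed H" "agree_closed K"
  shows "card H * card K = card (H \<inter> K) * card ((\<lambda>(s, t). agree s t) ` (H \<times> K))"
proof -
  let ?m = "\<lambda>(s, t). agree s t"
  have "card H * card K = card (H \<times> K)" by (simp add: card_cartesian_product)
  also have "\<dots> = (\<Sum>r\<in>?m ` (H \<times> K). card {p\<in>H \<times> K. ?m p = r})"
    using sum.image_gen[of "H \<times> K" "\<lambda>_. 1 :: nat" ?m] assms(1,2) by simp
  also have "\<dots> = (\<Sum>r\<in>?m ` (H \<times> K). card (H \<inter> K))"
  proof (rule sum.cong[OF refl])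
    fix r assume "r \<in> ?m ` (H \<times> K)"
    then obtain s0 t0 where s0: "s0 \<in> H" and t0: "t0 \<in> K" and r: "r = agree s0 t0" by auto
    \<comment> \<open>the fibre over \<open>r\<close> is the coset \<open>{(u s0, u t0) | u \<in> H \<inter> K}\<close>\<close>
    have "bij_betw (\<lambda>u. (agree u s0, agree u t0)) (H \<inter> K) {p\<in>H \<times> K. ?m p = r}"
    proof (rule bij_betw_byWitness[where f' = "\<lambda>(s, t). agree s s0"])
      show "\<forall>u\<in>H \<inter> K. (\<lambda>(s, t). agree s s0) (agree u s0, agree u t0) = u"
        by simp
      show "\<forall>p\<in>{p\<in>H \<times> K. ?m p = r}. (agree ((\<lambda>(s, t). agree s s0) p) s0, agree ((\<lambda>(s, t). agree s s0) p) t0) = p"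
        using r by (auto simp: agree_def fun_eq_iff)
      show "(\<lambda>u. (agree u s0, agree u t0)) ` (H \<inter> K) \<subseteq> {p\<in>H \<times> K. ?m p = r}"
        using assms(3,4) s0 t0 r by (auto simp: agree_closed_def agree_def fun_eq_iff)
      show "(\<lambda>(s, t). agree s s0) ` {p\<in>H \<times> K. ?m p = r} \<subseteq> H \<inter> K"
      proof
        fix u assume "u \<in> (\<lambda>(s, t). agree s s0) ` {p\<in>H \<times> K. ?m p = r}"
        then obtain s t where st: "s \<in> H" "t \<in> K" "agree s t = r" and u: "u = agree s s0"
          by auto
        have "u = agree t t0" using r st(3) u by (auto simp: agree_def fun_eq_iff)
        moreover have "agree s s0 \<in> H" "agree t t0 \<in> K"
          using assms(3,4) st s0 t0 unfolding agree_closed_def by blast+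
        ultimately show "u \<in> H \<inter> K" using u by simp
      qed
    qed
    then show "card {p\<in>H \<times> K. ?m p = r} = card (H \<inter> K)" by (simp add: bij_betw_same_card)
  qed
  also have "\<dots> = card (H \<inter> K) * card (?m ` (H \<times> K))" by simp
  finally show ?thesis .
qed

lemma card_mult_card_le_agree:
  assumes "finite H" "finite K" "agree_closed H" "agree_closed K"
    and "finite L" "\<And>s t. s \<in> H \<Longrightarrow> t \<in> K \<Longrightarrow> agree s t \<in> L"
  shows "card H * card K \<le> card (H \<inter> K) * card L"
proof -
  have "card ((\<lambda>(s, t). agree s t) ` (H \<times> K)) \<le> card L"
    using assms(5,6) by (intro card_mono) auto
  then show ?thesis
    using card_mult_card_eq_agree_image[OF assms(1-4)] by (simp add: mult_le_mono2)
qed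

section \<open>Faces enclosed by a simple cycle\<close>

lemma even_card_cyclic_changes:
  fixes xs :: "'a list" and P :: "'a \<Rightarrow> bool"
  shows "even (card {k. k < length xs \<and> P (xs ! k) \<noteq> P (xs ! ((k + 1) mod length xs))})"
proof (cases "length xs")
  case 0
  then show ?thesis by simp
next
  case (Suc n)
  define q where "q k = (if P (xs ! k) then 1 else 0 :: nat)" for k
  let ?C = "{k. k < Suc n \<and> P (xs ! k) \<noteq> P (xs ! ((k + 1) mod Suc n))}"
  have "(\<Sum>k<Suc n. q ((k + 1) mod Suc n)) = (\<Sum>k<n. q (Suc k)) + q 0"
    by (simp add: sum.lessThan_Suc)
  also have "\<dots> = (\<Sum>k<Suc n. q k)"
    by (simp only: sum.lessThan_Suc_shift add.commute)
  finally have rotate: "(\<Sum>k<Suc n. q ((k + 1) mod Suc n)) = (\<Sum>k<Suc n. q k)" .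
  have "2 * (\<Sum>k<Suc n. q k) = (\<Sum>k<Suc n. q k + q ((k + 1) mod Suc n))"
    using rotate by (simp add: sum.distrib)
  \<comment> \<open>\<open>q k + q (k + 1)\<close> is odd exactly at a change\<close>
  also have "\<dots> = (\<Sum>k<Suc n. of_bool (k \<in> ?C) + 2 * (q k * q ((k + 1) mod Suc n)))"
    by (intro sum.cong) (auto simp: q_def)
  also have "\<dots> = (\<Sum>k<Suc n. of_bool (k \<in> ?C)) + 2 * (\<Sum>k<Suc n. q k * q ((k + 1) mod Suc n))"
    by (simp only: sum.distrib sum_distrib_left)
  also have "(\<Sum>k<Suc n. of_bool (k \<in> ?C)) = card ({..<Suc n} \<inter> {k. k \<in> ?C})"
    by (subst sum_of_bool_eq) (simp_all only: finite_lessThan of_nat_id)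
  also have "{..<Suc n} \<inter> {k. k \<in> ?C} = ?C" by auto
  finally have "2 * (\<Sum>k<Suc n. q k) = card ?C + 2 * (\<Sum>k<Suc n. q k * q ((k + 1) mod Suc n))" .
  then have "card ?C = 2 * ((\<Sum>k<Suc n. q k) - (\<Sum>k<Suc n. q k * q ((k + 1) mod Suc n)))"
    by arith
  then show ?thesis
    unfolding Suc by simp
qed

definition cycle_succ :: "vertex list \<Rightarrow> nat \<Rightarrow> vertex" where
  "cycle_succ cs k = cs ! ((k + 1) mod length cs)"

definition cycle_edges :: "vertex list \<Rightarrow> vertex set set" where
  "cycle_edges cs = {{cs ! k, cycle_succ cs k} | k. k < length cs}"

definition ray_crossings :: "vertex list \<Rightarrow> int \<Rightarrow> int \<Rightarrow> int set" where
  "ray_crossings cs i j = {a. a \<ge> i \<and> cycle_edge cs (a, j - 1) (a, j)}"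

lemma cycle_edge_iff: "cycle_edge cs v w \<longleftrightarrow> {v, w} \<in> cycle_edges cs"
  unfolding cycle_edge_def cycle_edges_def cycle_succ_def by (auto simp: eq_commute)

lemma cycle_edges_subset: "e \<in> cycle_edges cs \<Longrightarrow> e \<subseteq> set cs"
  by (auto simp: cycle_edges_def cycle_succ_def intro!: nth_mem mod_less_divisor)

lemma cycle_edge_in_set: "cycle_edge cs v w \<Longrightarrow> v \<in> set cs \<and> w \<in> set cs"
  using cycle_edges_subset by (auto simp: cycle_edge_iff)

lemma enclosed_face_iff_ray_crossings:
  "enclosed_face cs (i, j) \<longleftrightarrow> odd (card (ray_crossings cs i j))"
  by (simp add: enclosed_face_def ray_crossings_def)

lemma finite_ray_crossings: "finite (ray_crossings cs i j)"
proof (rule finite_subset)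
  show "ray_crossings cs i j \<subseteq> fst ` set cs"
    using cycle_edge_in_set unfolding ray_crossings_def by force
qed simp

lemma enclosed_face_step_right:
  "enclosed_face cs (i, j) \<longleftrightarrow> enclosed_face cs (i + 1, j) \<noteq> cycle_edge cs (i, j - 1) (i, j)"
proof -
  have "ray_crossings cs i j =
      (if cycle_edge cs (i, j - 1) (i, j) then insert i else id) (ray_crossings cs (i + 1) j)"
    unfolding ray_crossings_def by (auto simp: order_le_less)
  moreover have "i \<notin> ray_crossings cs (i + 1) j" by (simp add: ray_crossings_def)
  ultimately show ?thesis
    using finite_ray_crossings by (simp add: enclosed_face_iff_ray_crossings)
qed

lemma adjacent_crossing_iff:
  assumes "lattice_adj v w"
  shows "((snd v = j \<and> fst v \<ge> i) \<noteq> (snd w = j \<and> fst w \<ge> i)) \<longleftrightarrow>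
    (\<exists>a\<ge>i. {v, w} = {(a, j - 1), (a, j)}) \<or> (\<exists>a\<ge>i. {v, w} = {(a, j), (a, j + 1)}) \<or>
    {v, w} = {(i - 1, j), (i, j)}"
proof -
  obtain v1 v2 w1 w2 where v: "v = (v1, v2)" and w: "w = (w1, w2)" by fastforce
  have "\<bar>v1 - w1\<bar> + \<bar>v2 - w2\<bar> = 1" using assms by (simp add: lattice_adj_def v w)
  then have "w1 = v1 + 1 \<and> w2 = v2 \<or> w1 = v1 - 1 \<and> w2 = v2 \<or> w1 = v1 \<and> w2 = v2 + 1 \<or> w1 = v1 \<and> w2 = v2 - 1"
    by arith
  then consider "w = (v1 + 1, v2)" | "w = (v1 - 1, v2)" | "w = (v1, v2 + 1)" | "w = (v1, v2 - 1)"
    using w by blast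
  then show ?thesis
    by cases (auto simp: v doubleton_eq_iff)
qed

context
  fixes cs :: "vertex list"
  assumes cycle: "simple_cycle cs"
begin

lemma cycle_succ_adj: "k < length cs \<Longrightarrow> lattice_adj (cs ! k) (cycle_succ cs k)"
  using cycle unfolding simple_cycle_def cycle_succ_def by blast

lemma inj_on_cycle_edge_at: "inj_on (\<lambda>k. {cs ! k, cycle_succ cs k}) {..<length cs}"
proof (rule inj_onI)
  let ?n = "length cs"
  fix k k' assume "k \<in> {..<?n}" "k' \<in> {..<?n}" and e: "{cs ! k, cycle_succ cs k} = {cs ! k', cycle_succ cs k'}"
  then have k: "k < ?n" "k' < ?n" by auto
  have n: "?n \<ge> 3" and dist: "distinct cs" using cycle by (auto simp: simple_cycle_def)
  have idx: "a = b" if "a < ?n" "b < ?n" "cs ! a = cs ! b" for a b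
    using that dist nth_eq_iff_index_eq by blast
  have succ: "Suc m mod ?n = (if Suc m = ?n then 0 else Suc m)" if "m < ?n" for m
    using that by auto
  from e consider "cs ! k = cs ! k'" | "cs ! k = cycle_succ cs k'" "cycle_succ cs k = cs ! k'"
    by (auto simp: doubleton_eq_iff)
  then show "k = k'"
  proof cases
    case 1
    then show ?thesis using idx k by blast
  next
    case 2
    \<comment> \<open>then \<open>k\<close> and \<open>k'\<close> are successors of each other, impossible on a cycle of length \<open>\<ge> 3\<close>\<close>
    have "?n > 0" using n by linarith
    then have "(k' + 1) mod ?n < ?n" "(k + 1) mod ?n < ?n" by simp_all
    then have "k = (k' + 1) mod ?n" "(k + 1) mod ?n = k'"
      using 2 idx k unfolding cycle_succ_def by metis+
    then show ?thesis using k n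
      by (auto simp: succ split: if_splits)
  qed
qed

lemma card_cycle_edges_filter:
  "card {k. k < length cs \<and> Q {cs ! k, cycle_succ cs k}} = card {e \<in> cycle_edges cs. Q e}"
proof -
  have "{e \<in> cycle_edges cs. Q e} = (\<lambda>k. {cs ! k, cycle_succ cs k}) ` {k. k < length cs \<and> Q {cs ! k, cycle_succ cs k}}"
    unfolding cycle_edges_def by auto
  moreover have "inj_on (\<lambda>k. {cs ! k, cycle_succ cs k}) {k. k < length cs \<and> Q {cs ! k, cycle_succ cs k}}"
    by (rule inj_on_subset[OF inj_on_cycle_edge_at]) auto
  ultimately show ?thesis by (simp add: card_image)
qed

lemma card_vertical_cycle_edges:
  "card {e \<in> cycle_edges cs. \<exists>a\<ge>i. e = {(a, j - 1), (a, j)}} = card (ray_crossings cs i j)"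
proof -
  have "{e \<in> cycle_edges cs. \<exists>a\<ge>i. e = {(a, j - 1), (a, j)}} = (\<lambda>a. {(a, j - 1), (a, j)}) ` ray_crossings cs i j"
    unfolding ray_crossings_def cycle_edge_iff by auto
  moreover have "inj_on (\<lambda>a. {(a, j - 1), (a, j)}) (ray_crossings cs i j)"
    by (rule inj_onI) (auto simp: doubleton_eq_iff)
  ultimately show ?thesis by (simp add: card_image)
qed

lemma card_row_crossings:
  fixes i j :: int
  defines "P \<equiv> \<lambda>v. snd v = j \<and> fst v \<ge> i"
  shows "card {k. k < length cs \<and> P (cs ! k) \<noteq> P (cycle_succ cs k)}
    = card (ray_crossings cs i j) + card (ray_crossings cs i (j + 1)) + of_bool (cycle_edge cs (i - 1, j) (i, j))"
proof -
  define V where "V j' = {e \<in> cycle_edges cs. \<exists>a\<ge>i. e = {(a, j' - 1), (a, j')}}" for j'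
  define H where "H = {e \<in> cycle_edges cs. e = {(i - 1, j), (i, j)}}"
  have "P (cs ! k) \<noteq> P (cycle_succ cs k) \<longleftrightarrow> {cs ! k, cycle_succ cs k} \<in> V j \<union> V (j + 1) \<union> H"
    if "k < length cs" for k
  proof -
    have "{cs ! k, cycle_succ cs k} \<in> cycle_edges cs"
      using that unfolding cycle_edges_def by blast
    then show ?thesis
      using adjacent_crossing_iff[OF cycle_succ_adj[OF that], of j i] by (simp add: P_def V_def H_def)
  qed
  then have "{k. k < length cs \<and> P (cs ! k) \<noteq> P (cycle_succ cs k)}
      = {k. k < length cs \<and> {cs ! k, cycle_succ cs k} \<in> V j \<union> V (j + 1) \<union> H}"
    by blast
  then have "card {k. k < length cs \<and> P (cs ! k) \<noteq> P (cycle_succ cs k)}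
      = card {e \<in> cycle_edges cs. e \<in> V j \<union> V (j + 1) \<union> H}"
    using card_cycle_edges_filter[of "\<lambda>e. e \<in> V j \<union> V (j + 1) \<union> H"] by simp
  also have "{e \<in> cycle_edges cs. e \<in> V j \<union> V (j + 1) \<union> H} = V j \<union> V (j + 1) \<union> H"
    by (auto simp: V_def H_def)
  also have "card (V j \<union> V (j + 1) \<union> H) = card (V j) + card (V (j + 1)) + card H"
  proof -
    have "finite (cycle_edges cs)" by (simp add: cycle_edges_def)
    then have "finite (V j')" "finite H" for j' by (simp_all add: V_def H_def)
    moreover have "V j \<inter> V (j + 1) = {}" "(V j \<union> V (j + 1)) \<inter> H = {}"
      by (auto simp: V_def H_def doubleton_eq_iff)
    ultimately show ?thesis by (simp add: card_Un_disjoint)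
  qed
  also have "H = (if cycle_edge cs (i - 1, j) (i, j) then {{(i - 1, j), (i, j)}} else {})"
    by (auto simp: H_def cycle_edge_iff)
  finally show ?thesis
    using card_vertical_cycle_edges[of i, folded V_def] by simp
qed

lemma enclosed_face_step_up:
  "enclosed_face cs (i, j) \<longleftrightarrow> enclosed_face cs (i, j + 1) \<noteq> cycle_edge cs (i - 1, j) (i, j)"
proof -
  \<comment> \<open>a closed cycle leaves any set of vertices an even number of times\<close>
  have "even (card (ray_crossings cs i j) + card (ray_crossings cs i (j + 1))
      + of_bool (cycle_edge cs (i - 1, j) (i, j)))"
    using even_card_cyclic_changes[of cs "\<lambda>v. snd v = j \<and> fst v \<ge> i"] card_row_crossings[of j i]
    by (simp add: cycle_succ_def)
  then show ?thesis by (auto simp: enclosed_face_iff_ray_crossings)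
qed

lemma enclosed_face_left_of_cycle:
  assumes "enclosed_face cs (i, j)"
  shows "\<exists>a\<ge>i. (a, j) \<in> set cs"
proof -
  have "ray_crossings cs i j \<noteq> {}"
    using assms by (auto simp: enclosed_face_iff_ray_crossings)
  then show ?thesis
    unfolding ray_crossings_def using cycle_edge_in_set by blast
qed

lemma faces_around_off_cycle:
  assumes "z \<notin> set cs"
  shows "faces_around z \<subseteq> D_faces cs \<or> faces_around z \<inter> D_faces cs = {}"
proof -
  obtain a b where z: "z = (a, b)" by fastforce
  have no_edge: "\<not> cycle_edge cs v w" if "z \<in> {v, w}" for v w
    using that assms cycle_edge_in_set by blast
  have "enclosed_face cs (a, b) = enclosed_face cs (a + 1, b)"
    using enclosed_face_step_right[of cs a b] no_edge[of "(a, b - 1)" "(a, b)"] by (simp add: z)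
  moreover have "enclosed_face cs (a, b + 1) = enclosed_face cs (a + 1, b + 1)"
    using enclosed_face_step_right[of cs a "b + 1"] no_edge[of "(a, b)" "(a, b + 1)"] by (simp add: z)
  moreover have "enclosed_face cs (a + 1, b) = enclosed_face cs (a + 1, b + 1)"
    using enclosed_face_step_up[of "a + 1" b] no_edge[of "(a, b)" "(a + 1, b)"] by (simp add: z)
  ultimately show ?thesis
    unfolding z faces_around_def D_faces_def by auto
qed

lemma enclosed_face_up_off_cycle:
  assumes "\<And>b. (i, b) \<notin> set cs" and "enclosed_face cs (i, j)"
  shows "enclosed_face cs (i, j + int k)"
proof (induction k)
  case (Suc k)
  have "\<not> cycle_edge cs (i - 1, j + int k) (i, j + int k)"
    using assms(1) cycle_edge_in_set by blast
  then show ?case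
    using Suc enclosed_face_step_up[of i "j + int k"] by (simp add: algebra_simps)
qed (use assms(2) in simp)

lemma finite_D_faces: "finite (D_faces cs)"
proof -
  define X where "X = fst ` set cs"
  define Y where "Y = snd ` set cs"
  have X: "Min X \<le> a \<and> a \<le> Max X" and Y: "Min Y \<le> b \<and> b \<le> Max Y" if "(a, b) \<in> set cs" for a b
    using that by (auto simp: X_def Y_def intro!: Min_le Max_ge image_eqI)
  have "D_faces cs \<subseteq> {Min X..Max X} \<times> {Min Y..Max Y}"
  proof
    fix f assume "f \<in> D_faces cs"
    moreover obtain i j where f: "f = (i, j)" by fastforce
    ultimately have enc: "enclosed_face cs (i, j)" by (simp add: D_faces_def)
    then obtain a where a: "a \<ge> i" "(a, j) \<in> set cs" using enclosed_face_left_of_cycle by blast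
    then have j: "Min Y \<le> j" "j \<le> Max Y" and "i \<le> Max X"
      using X[OF a(2)] Y[OF a(2)] by auto
    moreover have "Min X \<le> i"
    proof (rule ccontr)
      assume "\<not> Min X \<le> i"
      then have "(i, b) \<notin> set cs" for b using X by force
      from enclosed_face_up_off_cycle[OF this enc, of "nat (Max Y - j + 1)"]
      obtain a' where "(a', Max Y + 1) \<in> set cs"
        using j enclosed_face_left_of_cycle by fastforce
      then show False using Y by fastforce
    qed
    ultimately show "f \<in> {Min X..Max X} \<times> {Min Y..Max Y}" using j f by auto
  qed
  then show ?thesis by (rule finite_subset) simp
qed

end

section \<open>Odd and even spins\<close>

definition odd_agree :: "(face \<Rightarrow> bool) \<Rightarrow> vertex \<Rightarrow> bool" where
  "odd_agree \<sigma> z \<longleftrightarrow> \<sigma> (fst (odd_pair z)) = \<sigma> (snd (odd_pair z))"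

definition even_agree :: "(face \<Rightarrow> bool) \<Rightarrow> vertex \<Rightarrow> bool" where
  "even_agree \<sigma> z \<longleftrightarrow> \<sigma> (fst (even_pair z)) = \<sigma> (snd (even_pair z))"

definition plus_outside :: "vertex list \<Rightarrow> (face \<Rightarrow> bool) set" where
  "plus_outside cs = {\<sigma>. \<forall>f. f \<notin> D_faces cs \<longrightarrow> \<sigma> f}"

definition odd_agree_on :: "vertex list \<Rightarrow> vertex set \<Rightarrow> (face \<Rightarrow> bool) set" where
  "odd_agree_on cs \<xi> = {\<sigma> \<in> plus_outside cs. \<forall>z\<in>\<xi>. odd_agree \<sigma> z}"

definition even_agree_off :: "vertex list \<Rightarrow> vertex set \<Rightarrow> (face \<Rightarrow> bool) set" where
  "even_agree_off cs \<kappa> = {\<sigma> \<in> plus_outside cs. \<forall>z\<in>D_verts cs - \<kappa>. even_agree \<sigma> z}"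

lemma odd_pair_odd: "\<not> even_face (fst (odd_pair z))" "\<not> even_face (snd (odd_pair z))"
  and even_pair_even: "even_face (fst (even_pair z))" "even_face (snd (even_pair z))"
  unfolding odd_pair_def even_pair_def diag1_def diag2_def even_face_def by auto

lemma type_c_at_iff: "type_c_at \<sigma> z \<longleftrightarrow> odd_agree \<sigma> z \<and> even_agree \<sigma> z"
  unfolding type_c_at_def odd_agree_def even_agree_def odd_pair_def even_pair_def by auto

lemma ice_rule_at_iff: "ice_rule_at \<sigma> z \<longleftrightarrow> odd_agree \<sigma> z \<or> even_agree \<sigma> z"
  unfolding ice_rule_at_def odd_agree_def even_agree_def odd_pair_def even_pair_def by auto

lemma theta_eq: "theta cs \<sigma> = {z \<in> D_verts cs. \<not> odd_agree \<sigma> z}"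
  unfolding theta_def circ_ends_def odd_agree_def node_of_def by auto

lemma omega_eq: "omega cs \<sigma> = {z \<in> D_verts cs. \<not> even_agree \<sigma> z}"
  unfolding omega_def bullet_ends_def even_agree_def node_of_def by auto

lemma spin_configs_subset: "spin_configs cs \<subseteq> plus_outside cs"
  unfolding spin_configs_def plus_outside_def by auto

lemma all_plus_in_spin_configs: "(\<lambda>_. True) \<in> spin_configs cs"
  unfolding spin_configs_def ice_rule_at_def by simp

lemma finite_plus_outside:
  assumes "finite (D_faces cs)"
  shows "finite (plus_outside cs)"
proof (rule finite_surj)
  show "plus_outside cs \<subseteq> (\<lambda>S f. f \<notin> D_faces cs \<or> f \<in> S) ` Pow (D_faces cs)"
  proof
    fix \<sigma> assume "\<sigma> \<in> plus_outside cs"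
    then have "\<sigma> = (\<lambda>f. f \<notin> D_faces cs \<or> f \<in> {g \<in> D_faces cs. \<sigma> g})"
      unfolding plus_outside_def by auto
    then show "\<sigma> \<in> (\<lambda>S f. f \<notin> D_faces cs \<or> f \<in> S) ` Pow (D_faces cs)" by blast
  qed
qed (use assms in simp)

lemma finite_D_verts:
  assumes "finite (D_faces cs)"
  shows "finite (D_verts cs)"
proof (rule finite_subset)
  show "D_verts cs \<subseteq> set cs \<union> D_faces cs"
    unfolding D_verts_def faces_around_def by auto
qed (use assms in simp)

lemma agree_closed_odd_agree_on: "agree_closed (odd_agree_on cs \<xi>)"
  unfolding agree_closed_def odd_agree_on_def plus_outside_def odd_agree_def agree_def by auto

lemma agree_closed_even_agree_off: "agree_closed (even_agree_off cs \<kappa>)"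
  unfolding agree_closed_def even_agree_off_def plus_outside_def even_agree_def agree_def by auto

text \<open>\<open>\<xi>\<close> constrains only the odd spins and \<open>\<kappa>\<close> only the even ones, so the two events are
  independent under the uniform measure on \<open>plus_outside cs\<close>.\<close>

lemma card_odd_agree_on_Int_even_agree_off:
  assumes "finite (D_faces cs)"
  shows "card (odd_agree_on cs \<xi>) * card (even_agree_off cs \<kappa>)
    = card (odd_agree_on cs \<xi> \<inter> even_agree_off cs \<kappa>) * card (plus_outside cs)"
proof -
  let ?O = "odd_agree_on cs \<xi>" and ?E = "even_agree_off cs \<kappa>"
  have fin: "finite ?O" "finite ?E"
    using finite_plus_outside[OF assms] by (auto simp: odd_agree_on_def even_agree_off_def)
  have "(\<lambda>(s, t). agree s t) ` (?O \<times> ?E) = plus_outside cs"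
  proof
    show "(\<lambda>(s, t). agree s t) ` (?O \<times> ?E) \<subseteq> plus_outside cs"
      by (auto simp: odd_agree_on_def even_agree_off_def plus_outside_def agree_def)
    show "plus_outside cs \<subseteq> (\<lambda>(s, t). agree s t) ` (?O \<times> ?E)"
    proof
      fix \<sigma> assume \<sigma>: "\<sigma> \<in> plus_outside cs"
      define \<rho> where "\<rho> f = (even_face f \<longrightarrow> \<sigma> f)" for f
      define \<tau> where "\<tau> f = (\<not> even_face f \<longrightarrow> \<sigma> f)" for f
      have "\<rho> \<in> ?O" "\<tau> \<in> ?E"
        using \<sigma> odd_pair_odd even_pair_even
        by (auto simp: odd_agree_on_def even_agree_off_def plus_outside_def odd_agree_def even_agree_def \<rho>_def \<tau>_def)
      moreover have "\<sigma> = agree \<rho> \<tau>"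
        by (auto simp: agree_def \<rho>_def \<tau>_def)
      ultimately show "\<sigma> \<in> (\<lambda>(s, t). agree s t) ` (?O \<times> ?E)" by blast
    qed
  qed
  then show ?thesis
    using card_mult_card_eq_agree_image[OF fin agree_closed_odd_agree_on agree_closed_even_agree_off]
    by simp
qed

lemma fkg_lattice_card_odd_agree_on:
  assumes "finite (D_faces cs)"
  shows "fkg_lattice E (\<lambda>\<xi>. real (card (odd_agree_on cs \<xi>)))"
  unfolding fkg_lattice_def
proof (intro allI impI)
  fix \<xi> \<xi>'
  have "finite (odd_agree_on cs A)" for A
    using finite_plus_outside[OF assms] by (simp add: odd_agree_on_def)
  moreover have "odd_agree_on cs \<xi> \<inter> odd_agree_on cs \<xi>' = odd_agree_on cs (\<xi> \<union> \<xi>')"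
    by (auto simp: odd_agree_on_def)
  moreover have "agree s t \<in> odd_agree_on cs (\<xi> \<inter> \<xi>')"
    if "s \<in> odd_agree_on cs \<xi>" "t \<in> odd_agree_on cs \<xi>'" for s t
    using that by (auto simp: odd_agree_on_def plus_outside_def odd_agree_def agree_def)
  ultimately have "card (odd_agree_on cs \<xi>) * card (odd_agree_on cs \<xi>')
      \<le> card (odd_agree_on cs (\<xi> \<union> \<xi>')) * card (odd_agree_on cs (\<xi> \<inter> \<xi>'))"
    using card_mult_card_le_agree[OF _ _ agree_closed_odd_agree_on agree_closed_odd_agree_on] by metis
  then show "real (card (odd_agree_on cs \<xi>)) * real (card (odd_agree_on cs \<xi>'))
      \<le> real (card (odd_agree_on cs (\<xi> \<union> \<xi>'))) * real (card (odd_agree_on cs (\<xi> \<inter> \<xi>')))"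
    by (simp flip: of_nat_mult)
qed

lemma card_even_agree_off_log_supermodular:
  assumes "finite (D_faces cs)"
  shows "card (even_agree_off cs \<kappa>) * card (even_agree_off cs \<kappa>')
    \<le> card (even_agree_off cs (\<kappa> \<union> \<kappa>')) * card (even_agree_off cs (\<kappa> \<inter> \<kappa>'))"
proof -
  have "finite (even_agree_off cs A)" for A
    using finite_plus_outside[OF assms] by (simp add: even_agree_off_def)
  moreover have "even_agree_off cs \<kappa> \<inter> even_agree_off cs \<kappa>' = even_agree_off cs (\<kappa> \<inter> \<kappa>')"
    by (auto simp: even_agree_off_def)
  moreover have "agree s t \<in> even_agree_off cs (\<kappa> \<union> \<kappa>')"
    if "s \<in> even_agree_off cs \<kappa>" "t \<in> even_agree_off cs \<kappa>'" for s t
    using that by (auto simp: even_agree_off_def plus_outside_def even_agree_def agree_def)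
  ultimately show ?thesis
    using card_mult_card_le_agree[OF _ _ agree_closed_even_agree_off agree_closed_even_agree_off]
    by (metis mult.commute)
qed

section \<open>The law of the edge configuration\<close>

definition coupling_weight :: "vertex list \<Rightarrow> real \<Rightarrow> (face \<Rightarrow> bool) \<Rightarrow> vertex set \<Rightarrow> real" where
  "coupling_weight cs c \<sigma> \<xi> =
     (if (\<forall>z\<in>\<xi>. odd_agree \<sigma> z) \<and> (\<forall>z\<in>D_verts cs - \<xi>. even_agree \<sigma> z)
      then (c - 1) ^ card {z\<in>\<xi>. even_agree \<sigma> z} else 0)"

definition even_weight :: "vertex list \<Rightarrow> real \<Rightarrow> vertex set \<Rightarrow> real" where
  "even_weight cs c \<xi> = (\<Sum>\<kappa>\<in>Pow \<xi>. (c - 2) ^ card (\<xi> - \<kappa>) * card (even_agree_off cs \<kappa>))"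

definition spin_partition :: "vertex list \<Rightarrow> real \<Rightarrow> real" where
  "spin_partition cs c = (\<Sum>\<tau>\<in>spin_configs cs. spin_weight cs c \<tau>)"

lemma power_add_mult_fraction_powers:
  fixes c :: real
  assumes "c \<noteq> 0"
  shows "c ^ (m + n) * (((c - 1) / c) ^ m * (1 - (c - 1) / c) ^ n) = (c - 1) ^ m"
proof -
  have "c ^ (m + n) * (((c - 1) / c) ^ m * (1 - (c - 1) / c) ^ n)
      = (c * ((c - 1) / c)) ^ m * (c * (1 - (c - 1) / c)) ^ n"
    by (simp only: power_add power_mult_distrib mult_ac)
  also have "c * ((c - 1) / c) = c - 1"
    using assms by (simp add: field_simps)
  also have "c * (1 - (c - 1) / c) = 1"
    using assms by (simp add: field_simps)
  finally show ?thesis by simp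
qed

lemma spin_weight_mult_xi_cond:
  assumes "c \<noteq> 0" "finite (D_verts cs)" "\<xi> \<subseteq> D_verts cs"
  shows "spin_weight cs c \<sigma> * xi_cond cs c \<sigma> \<xi> = coupling_weight cs c \<sigma> \<xi>"
proof -
  define F where "F = {z \<in> D_verts cs. odd_agree \<sigma> z \<and> even_agree \<sigma> z}"
  define p where "p = (c - 1) / c"
  have F: "D_verts cs - theta cs \<sigma> - omega cs \<sigma> = F"
    unfolding F_def theta_eq omega_eq by auto
  have admissible: "(\<xi> \<subseteq> D_verts cs \<and> \<xi> \<inter> theta cs \<sigma> = {} \<and> omega cs \<sigma> \<subseteq> \<xi>) \<longleftrightarrow>
      (\<forall>z\<in>\<xi>. odd_agree \<sigma> z) \<and> (\<forall>z\<in>D_verts cs - \<xi>. even_agree \<sigma> z)"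
    using assms(3) unfolding theta_eq omega_eq by auto
  show ?thesis
  proof (cases "(\<forall>z\<in>\<xi>. odd_agree \<sigma> z) \<and> (\<forall>z\<in>D_verts cs - \<xi>. even_agree \<sigma> z)")
    case False
    then have "xi_cond cs c \<sigma> \<xi> = 0" "coupling_weight cs c \<sigma> \<xi> = 0"
      using admissible unfolding xi_cond_def coupling_weight_def Let_def by (simp_all only: if_False)
    then show ?thesis by simp
  next
    case True
    have "finite F" using assms(2) by (simp add: F_def)
    then have card_F: "card F = card (\<xi> \<inter> F) + card (F - \<xi>)"
      by (metis Int_commute card_Int_Diff)
    have "spin_weight cs c \<sigma> = c ^ card F"
      by (simp add: spin_weight_def N_c_def F_def type_c_at_iff)
    moreover have "xi_cond cs c \<sigma> \<xi> = p ^ card (\<xi> \<inter> F) * (1 - p) ^ card (F - \<xi>)"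
      using True admissible F by (simp add: xi_cond_def Let_def p_def)
    moreover have "\<xi> \<inter> F = {z \<in> \<xi>. even_agree \<sigma> z}"
      using True assms(3) by (auto simp: F_def)
    ultimately show ?thesis
      using True power_add_mult_fraction_powers[OF assms(1)]
      by (simp add: card_F coupling_weight_def p_def)
  qed
qed

text \<open>Expanding \<open>(c - 1)\<^sup>k = ((c - 2) + 1)\<^sup>k\<close> over the vertices of \<open>\<xi>\<close> at which the even spins
  agree; \<open>\<kappa>\<close> is the set of vertices of \<open>\<xi>\<close> not chosen.\<close>

lemma coupling_weight_eq_sum:
  assumes "finite (D_verts cs)" "\<xi> \<subseteq> D_verts cs" "\<sigma> \<in> plus_outside cs"
  shows "coupling_weight cs c \<sigma> \<xi> = (\<Sum>\<kappa>\<in>Pow \<xi>.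
    (c - 2) ^ card (\<xi> - \<kappa>) * of_bool (\<sigma> \<in> odd_agree_on cs \<xi> \<inter> even_agree_off cs \<kappa>))"
proof (cases "(\<forall>z\<in>\<xi>. odd_agree \<sigma> z) \<and> (\<forall>z\<in>D_verts cs - \<xi>. even_agree \<sigma> z)")
  case False
  then have "\<sigma> \<notin> odd_agree_on cs \<xi> \<inter> even_agree_off cs \<kappa>" if "\<kappa> \<subseteq> \<xi>" for \<kappa>
    using that by (auto simp: odd_agree_on_def even_agree_off_def)
  moreover have "coupling_weight cs c \<sigma> \<xi> = 0"
    using False unfolding coupling_weight_def by (simp only: if_False)
  ultimately show ?thesis
    by (simp del: Int_iff)
next
  case True
  define A where "A = {z \<in> \<xi>. even_agree \<sigma> z}"
  have fin: "finite \<xi>" using assms(1,2) finite_subset by blast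
  have member: "\<sigma> \<in> odd_agree_on cs \<xi> \<inter> even_agree_off cs \<kappa> \<longleftrightarrow> \<xi> - \<kappa> \<in> Pow A" if "\<kappa> \<subseteq> \<xi>" for \<kappa>
    using True assms(2,3) that by (auto simp: odd_agree_on_def even_agree_off_def A_def)
  have "(\<Sum>\<kappa>\<in>Pow \<xi>. (c - 2) ^ card (\<xi> - \<kappa>) * of_bool (\<sigma> \<in> odd_agree_on cs \<xi> \<inter> even_agree_off cs \<kappa>))
      = (\<Sum>\<kappa>\<in>Pow \<xi>. (c - 2) ^ card (\<xi> - \<kappa>) * of_bool (\<xi> - \<kappa> \<in> Pow A))"
  proof (rule sum.cong[OF refl])
    fix \<kappa> assume "\<kappa> \<in> Pow \<xi>"
    then show "(c - 2) ^ card (\<xi> - \<kappa>) * of_bool (\<sigma> \<in> odd_agree_on cs \<xi> \<inter> even_agree_off cs \<kappa>)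
        = (c - 2) ^ card (\<xi> - \<kappa>) * of_bool (\<xi> - \<kappa> \<in> Pow A)"
      using member[of \<kappa>] by simp
  qed
  also have "\<dots> = (\<Sum>\<eta>\<in>Pow \<xi>. (c - 2) ^ card \<eta> * of_bool (\<eta> \<in> Pow A))"
    by (rule sum.reindex_bij_witness[where i = "\<lambda>\<eta>. \<xi> - \<eta>" and j = "\<lambda>\<eta>. \<xi> - \<eta>"]) auto
  also have "\<dots> = (\<Sum>\<eta>\<in>Pow A. (c - 2) ^ card \<eta>)"
  proof -
    have "Pow \<xi> \<inter> {\<eta>. \<eta> \<subseteq> A} = Pow A" by (auto simp: A_def)
    then show ?thesis using fin by simp
  qed
  also have "\<dots> = (c - 1) ^ card A"
    using power_eq_sum_Pow[of A "c - 2"] fin by (simp add: A_def)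
  finally show ?thesis
    using True by (simp add: coupling_weight_def A_def)
qed

lemma sum_coupling_weight:
  assumes "finite (D_faces cs)" "\<xi> \<subseteq> D_verts cs"
  shows "(\<Sum>\<sigma>\<in>plus_outside cs. coupling_weight cs c \<sigma> \<xi>) * card (plus_outside cs)
    = card (odd_agree_on cs \<xi>) * even_weight cs c \<xi>"
proof -
  let ?P = "plus_outside cs" and ?O = "odd_agree_on cs \<xi>" and ?E = "even_agree_off cs"
  have fin: "finite ?P" using finite_plus_outside[OF assms(1)] .
  have count: "(\<Sum>\<sigma>\<in>?P. of_bool (\<sigma> \<in> ?O \<inter> ?E \<kappa>)) = real (card (?O \<inter> ?E \<kappa>))" for \<kappa>
  proof -
    have "?P \<inter> {\<sigma>. \<sigma> \<in> ?O \<inter> ?E \<kappa>} = ?O \<inter> ?E \<kappa>" by (auto simp: odd_agree_on_def)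
    then show ?thesis using fin by (subst sum_of_bool_eq) simp_all
  qed
  have "(\<Sum>\<sigma>\<in>?P. coupling_weight cs c \<sigma> \<xi>)
      = (\<Sum>\<sigma>\<in>?P. \<Sum>\<kappa>\<in>Pow \<xi>. (c - 2) ^ card (\<xi> - \<kappa>) * of_bool (\<sigma> \<in> ?O \<inter> ?E \<kappa>))"
    using finite_D_verts[OF assms(1)] assms(2) by (intro sum.cong) (simp_all add: coupling_weight_eq_sum)
  also have "\<dots> = (\<Sum>\<kappa>\<in>Pow \<xi>. (c - 2) ^ card (\<xi> - \<kappa>) * card (?O \<inter> ?E \<kappa>))"
    by (subst sum.swap) (simp only: count flip: sum_distrib_left)
  finally have "(\<Sum>\<sigma>\<in>?P. coupling_weight cs c \<sigma> \<xi>) * card ?P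
      = (\<Sum>\<kappa>\<in>Pow \<xi>. (c - 2) ^ card (\<xi> - \<kappa>) * (card (?O \<inter> ?E \<kappa>) * card ?P))"
    by (simp add: sum_distrib_right mult.assoc)
  also have "\<dots> = (\<Sum>\<kappa>\<in>Pow \<xi>. (c - 2) ^ card (\<xi> - \<kappa>) * (card ?O * card (?E \<kappa>)))"
    by (simp only: card_odd_agree_on_Int_even_agree_off[OF assms(1), symmetric])
  finally show ?thesis
    by (simp add: even_weight_def sum_distrib_left mult_ac)
qed

lemma even_weight_nonneg: "c \<ge> 2 \<Longrightarrow> 0 \<le> even_weight cs c \<xi>"
  by (simp add: even_weight_def sum_nonneg)

lemma fkg_lattice_even_weight:
  assumes "finite (D_faces cs)" "c \<ge> 2"
  shows "fkg_lattice (D_verts cs) (even_weight cs c)"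
proof -
  let ?E = "even_agree_off cs"
  define \<alpha> where "\<alpha> \<xi> \<kappa> = of_bool (\<kappa> \<subseteq> \<xi>) * (c - 2) ^ card (\<xi> - \<kappa>) * real (card (?E \<kappa>))" for \<xi> \<kappa>
  have fin: "finite (D_verts cs)" using finite_D_verts[OF assms(1)] .
  have expand: "even_weight cs c \<xi> = (\<Sum>\<kappa>\<in>Pow (D_verts cs). \<alpha> \<xi> \<kappa>)" if "\<xi> \<subseteq> D_verts cs" for \<xi>
  proof -
    have "Pow (D_verts cs) \<inter> {\<kappa>. \<kappa> \<subseteq> \<xi>} = Pow \<xi>" using that by auto
    then show ?thesis by (simp add: \<alpha>_def even_weight_def mult.assoc fin)
  qed
  have "fkg_lattice (D_verts cs) (\<lambda>\<xi>. \<Sum>\<kappa>\<in>Pow (D_verts cs). \<alpha> \<xi> \<kappa>)"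
  proof (rule fkg_lattice_sum_Pow[OF fin])
    show "0 \<le> \<alpha> \<xi> \<kappa>" for \<xi> \<kappa> using assms(2) by (simp add: \<alpha>_def)
  next
    fix \<xi> \<xi>' \<kappa> \<kappa>' assume "\<xi> \<subseteq> D_verts cs" "\<xi>' \<subseteq> D_verts cs"
    then have fin_\<xi>: "finite \<xi>" "finite \<xi>'" using fin finite_subset by auto
    show "\<alpha> \<xi> \<kappa> * \<alpha> \<xi>' \<kappa>' \<le> \<alpha> (\<xi> \<union> \<xi>') (\<kappa> \<union> \<kappa>') * \<alpha> (\<xi> \<inter> \<xi>') (\<kappa> \<inter> \<kappa>')"
    proof (cases "\<kappa> \<subseteq> \<xi> \<and> \<kappa>' \<subseteq> \<xi>'")
      case True
      let ?m = "card (\<xi> - \<kappa>) + card (\<xi>' - \<kappa>')"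
      have "\<alpha> \<xi> \<kappa> * \<alpha> \<xi>' \<kappa>' = (c - 2) ^ ?m * (real (card (?E \<kappa>)) * real (card (?E \<kappa>')))"
        using True by (simp add: \<alpha>_def power_add mult_ac)
      also have "\<dots> \<le> (c - 2) ^ ?m * (real (card (?E (\<kappa> \<union> \<kappa>'))) * real (card (?E (\<kappa> \<inter> \<kappa>'))))"
        using card_even_agree_off_log_supermodular[OF assms(1), of \<kappa> \<kappa>'] assms(2)
        by (intro mult_left_mono) (simp_all flip: of_nat_mult)
      also have "?m = card ((\<xi> \<union> \<xi>') - (\<kappa> \<union> \<kappa>')) + card ((\<xi> \<inter> \<xi>') - (\<kappa> \<inter> \<kappa>'))"
        using card_Diff_add_card_Diff[OF fin_\<xi>] True by blast
      also have "(c - 2) ^ \<dots> * (real (card (?E (\<kappa> \<union> \<kappa>'))) * real (card (?E (\<kappa> \<inter> \<kappa>'))))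
          = \<alpha> (\<xi> \<union> \<xi>') (\<kappa> \<union> \<kappa>') * \<alpha> (\<xi> \<inter> \<xi>') (\<kappa> \<inter> \<kappa>')"
        using True by (auto simp: \<alpha>_def power_add mult_ac)
      finally show ?thesis .
    next
      case False
      then show ?thesis
        using assms(2) by (auto simp: \<alpha>_def)
    qed
  qed
  then show ?thesis
    by (rule iffD2[OF fkg_lattice_cong, rotated]) (erule expand)
qed

lemma sum_xi_cond:
  assumes "finite (D_verts cs)" "\<sigma> \<in> spin_configs cs"
  shows "(\<Sum>\<xi>\<in>Pow (D_verts cs). xi_cond cs c \<sigma> \<xi>) = 1"
proof -
  define \<theta> where "\<theta> = theta cs \<sigma>"
  define \<omega> where "\<omega> = omega cs \<sigma>"
  define F where "F = D_verts cs - \<theta> - \<omega>"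
  define p where "p = (c - 1) / c"
  \<comment> \<open>by the ice rule, no vertex has both diagonal pairs disagreeing\<close>
  have "\<theta> \<inter> \<omega> = {}"
    using assms(2) unfolding \<theta>_def \<omega>_def theta_eq omega_eq spin_configs_def ice_rule_at_iff by auto
  moreover have "\<theta> \<subseteq> D_verts cs" "\<omega> \<subseteq> D_verts cs"
    unfolding \<theta>_def \<omega>_def theta_def omega_def by auto
  ultimately have bij: "bij_betw (\<lambda>B. \<omega> \<union> B) (Pow F) {\<xi> \<in> Pow (D_verts cs). \<xi> \<inter> \<theta> = {} \<and> \<omega> \<subseteq> \<xi>}"
    by (intro bij_betw_byWitness[where f' = "\<lambda>\<xi>. \<xi> \<inter> F"]) (auto simp: F_def)
  have "(\<Sum>\<xi>\<in>Pow (D_verts cs). xi_cond cs c \<sigma> \<xi>) = (\<Sum>\<xi>\<in>Pow (D_verts cs).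
      if \<xi> \<inter> \<theta> = {} \<and> \<omega> \<subseteq> \<xi> then p ^ card (\<xi> \<inter> F) * (1 - p) ^ card (F - \<xi>) else 0)"
    by (intro sum.cong) (auto simp: xi_cond_def Let_def \<theta>_def \<omega>_def F_def p_def)
  also have "\<dots> = (\<Sum>\<xi>\<in>{\<xi> \<in> Pow (D_verts cs). \<xi> \<inter> \<theta> = {} \<and> \<omega> \<subseteq> \<xi>}.
      p ^ card (\<xi> \<inter> F) * (1 - p) ^ card (F - \<xi>))"
    using assms(1) by (intro sum.inter_filter[symmetric]) simp
  also have "\<dots> = (\<Sum>B\<in>Pow F. p ^ card ((\<omega> \<union> B) \<inter> F) * (1 - p) ^ card (F - (\<omega> \<union> B)))"
    by (rule sum.reindex_bij_betw[OF bij, symmetric])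
  also have "\<dots> = (\<Sum>B\<in>Pow F. p ^ card B * (1 - p) ^ card (F - B))"
  proof (rule sum.cong[OF refl])
    fix B assume "B \<in> Pow F"
    then have "(\<omega> \<union> B) \<inter> F = B" "F - (\<omega> \<union> B) = F - B" by (auto simp: F_def)
    then show "p ^ card ((\<omega> \<union> B) \<inter> F) * (1 - p) ^ card (F - (\<omega> \<union> B)) = p ^ card B * (1 - p) ^ card (F - B)"
      by simp
  qed
  also have "\<dots> = 1"
    using assms(1) by (simp add: sum_Pow_power_card F_def)
  finally show ?thesis .
qed

context
  fixes cs :: "vertex list"
  assumes cycle: "simple_cycle cs"
begin

lemma coupling_weight_eq_0:
  assumes "\<sigma> \<in> plus_outside cs" "\<sigma> \<notin> spin_configs cs"
  shows "coupling_weight cs c \<sigma> \<xi> = 0"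
proof (rule ccontr)
  assume "coupling_weight cs c \<sigma> \<xi> \<noteq> 0"
  then have agree: "\<forall>z\<in>\<xi>. odd_agree \<sigma> z" "\<forall>z\<in>D_verts cs - \<xi>. even_agree \<sigma> z"
    unfolding coupling_weight_def by (auto split: if_splits)
  have "ice_rule_at \<sigma> z" for z
  proof (cases "z \<in> D_verts cs")
    case True
    then show ?thesis using agree unfolding ice_rule_at_iff by blast
  next
    case False
    \<comment> \<open>a vertex outside \<open>D\<close> has all four faces outside, where \<open>\<sigma>\<close> is \<open>+1\<close>\<close>
    then have "faces_around z \<inter> D_faces cs = {}"
      using faces_around_off_cycle[OF cycle] unfolding D_verts_def by blast
    then show ?thesis
      using assms(1) unfolding plus_outside_def ice_rule_at_def diag1_def diag2_def faces_around_def by auto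
  qed
  then show False
    using assms unfolding spin_configs_def plus_outside_def by auto
qed

lemma spin_partition_pos:
  assumes "c > 0"
  shows "spin_partition cs c > 0"
proof -
  have "finite (spin_configs cs)"
    using finite_plus_outside[OF finite_D_faces[OF cycle]] spin_configs_subset finite_subset by blast
  then show ?thesis
    unfolding spin_partition_def spin_weight_def
    using assms by (intro sum_pos2[OF _ all_plus_in_spin_configs]) simp_all
qed

lemma FKIs_eq:
  assumes "c \<ge> 2" "\<xi> \<subseteq> D_verts cs"
  shows "FKIs cs c \<xi> = card (odd_agree_on cs \<xi>) * even_weight cs c \<xi>
    / (card (plus_outside cs) * spin_partition cs c)"
proof -
  have fin: "finite (D_faces cs)" "finite (D_verts cs)" "finite (plus_outside cs)"
    using finite_D_faces[OF cycle] finite_D_verts finite_plus_outside by blast+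
  have "FKIs cs c \<xi> = (\<Sum>\<sigma>\<in>spin_configs cs. coupling_weight cs c \<sigma> \<xi> / spin_partition cs c)"
    unfolding FKIs_def
  proof (rule sum.cong[OF refl])
    fix \<sigma> assume "\<sigma> \<in> spin_configs cs"
    then show "spin_prob cs c \<sigma> * xi_cond cs c \<sigma> \<xi> = coupling_weight cs c \<sigma> \<xi> / spin_partition cs c"
      using spin_weight_mult_xi_cond[of c cs \<xi> \<sigma>] assms fin(2)
      by (simp add: spin_prob_def spin_partition_def)
  qed
  also have "\<dots> = (\<Sum>\<sigma>\<in>spin_configs cs. coupling_weight cs c \<sigma> \<xi>) / spin_partition cs c"
    by (simp add: sum_divide_distrib)
  also have "(\<Sum>\<sigma>\<in>spin_configs cs. coupling_weight cs c \<sigma> \<xi>) = (\<Sum>\<sigma>\<in>plus_outside cs. coupling_weight cs c \<sigma> \<xi>)"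
    using fin(3) spin_configs_subset coupling_weight_eq_0 by (intro sum.mono_neutral_left) auto
  also have "\<dots> = card (odd_agree_on cs \<xi>) * even_weight cs c \<xi> / card (plus_outside cs)"
  proof -
    have "card (plus_outside cs) \<noteq> 0"
      using fin(3) all_plus_in_spin_configs spin_configs_subset by (auto simp: card_eq_0_iff)
    then show ?thesis by (simp add: eq_divide_eq sum_coupling_weight[OF fin(1) assms(2)])
  qed
  finally show ?thesis by simp
qed

lemma sum_FKIs:
  assumes "c > 0"
  shows "(\<Sum>\<xi>\<in>Pow (D_verts cs). FKIs cs c \<xi>) = 1"
proof -
  have "(\<Sum>\<xi>\<in>Pow (D_verts cs). FKIs cs c \<xi>)
      = (\<Sum>\<sigma>\<in>spin_configs cs. spin_prob cs c \<sigma> * (\<Sum>\<xi>\<in>Pow (D_verts cs). xi_cond cs c \<sigma> \<xi>))"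
    unfolding FKIs_def by (subst sum.swap) (simp add: sum_distrib_left)
  also have "\<dots> = (\<Sum>\<sigma>\<in>spin_configs cs. spin_weight cs c \<sigma> / spin_partition cs c)"
    using sum_xi_cond finite_D_verts[OF finite_D_faces[OF cycle]]
    by (intro sum.cong) (simp_all add: spin_prob_def spin_partition_def)
  also have "\<dots> = 1"
    using spin_partition_pos[OF assms] by (simp add: spin_partition_def flip: sum_divide_distrib)
  finally show ?thesis .
qed

lemma FKIs_nonneg:
  assumes "c \<ge> 2" "\<xi> \<subseteq> D_verts cs"
  shows "0 \<le> FKIs cs c \<xi>"
proof -
  have "0 < spin_partition cs c" using spin_partition_pos assms(1) by simp
  then show ?thesis
    unfolding FKIs_eq[OF assms] using even_weight_nonneg[OF assms(1)]
    by (intro divide_nonneg_nonneg mult_nonneg_nonneg) simp_all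
qed

lemma fkg_lattice_FKIs:
  assumes "c \<ge> 2"
  shows "fkg_lattice (D_verts cs) (FKIs cs c)"
proof -
  have fin: "finite (D_faces cs)" using finite_D_faces[OF cycle] .
  have "fkg_lattice (D_verts cs) (\<lambda>\<xi>. card (odd_agree_on cs \<xi>) * even_weight cs c \<xi>
      / (card (plus_outside cs) * spin_partition cs c))"
    using fkg_lattice_mult[OF fkg_lattice_card_odd_agree_on[OF fin] fkg_lattice_even_weight[OF fin assms]]
      even_weight_nonneg[OF assms]
    by (intro fkg_lattice_divide) simp
  then show ?thesis
    by (rule iffD2[OF fkg_lattice_cong, rotated]) (erule FKIs_eq[OF assms])
qed

end

theorem proposition7p4:
  fixes c :: real and cs :: "vertex list"
  assumes "c \<ge> 2" and "simple_cycle cs"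
  shows "fkg_lattice (D_verts cs) (FKIs cs c) \<and> positively_associated (D_verts cs) (FKIs cs c)"
proof
  show fkg: "fkg_lattice (D_verts cs) (FKIs cs c)"
    using fkg_lattice_FKIs[OF assms(2,1)] .
  have "c > 0" using assms(1) by simp
  then show "positively_associated (D_verts cs) (FKIs cs c)"
    using fkg_lattice_imp_positively_associated[OF finite_D_verts[OF finite_D_faces[OF assms(2)]]
        FKIs_nonneg[OF assms(2,1)] sum_FKIs[OF assms(2)] fkg]
    by blast
qed

end
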